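(* Let $X$ be a precubical set and $\alpha$ a dipath on $\vec{|X|}$. Then there is a dipath $\beta$ on $\vec{|X|}$ from $\mathrm{supp}(\alpha(0))_*(0,\ldots,0)$ to $\mathrm{supp}(\alpha(1))_*(0,\ldots,0)$ such that $U(\beta):[0,1]\to|X|$ is cellular and $U(\alpha)$ is homotopic to $U(\beta)$. Moreover, if $\alpha$ is non-constant and $\alpha(0)=\alpha(1)$, then $\beta$ can be taken to be non-constant.
   Context: Streams: a circulation on a space $X$ assigns to each open $V\subset X$ a preorder $\leqslant_V$ such that for every collection $\mathcal{O}$ of open sets, $\leqslant_{\bigcup\mathcal{O}}$ is the preorder with smallest graph containing $\bigcup_{V\in\mathcal{O}}\mathrm{graph}(\leqslant_V)$; a stream is a space with a circulation; a stream map $f:X\to Y$ is continuous with $f(x)\leqslant_V f(y)$ whenever $x\leqslant_{f^{-1}V}y$; $U$ is the forgetful functor to spaces. $\vec\square[1]$ is $[0,1]$ with circulation $x\leqslant_V y$ iff $x\le y$ and $[x,y]\subset V$; a dipath on a stream is a stream map from $\vec\square[1]$. Precubical sets: $\square$ is the smallest subcategory of posets and monotone maps closed under cartesian products (unit $[0]$) containing $\delta_\pm:[0]\to[1]=\{0<1\}$; objects $[1]^n$. A precubical set is a functor $X:\square^{op}\to\mathbf{Set}$, $X_n=X([1]^n)$; $\square[n]=\square(-,[1]^n)$, and $\sigma\in X_n$ corresponds by Yoneda to $\sigma_*:\square[n]\to X$. The geometric realization $|X|=\int^{[1]^n}X_n\cdot\mathbb{I}^n$ (with $\square$-morphisms extended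 linearly) is a CW complex whose $n$-cells have characteristic maps $|\sigma_*|:\mathbb{I}^n=|\square[n]|\to|X|$, $\sigma\in X_n$. Each $x\in|X|$ lies in the interior of a unique closed cell; $\mathrm{supp}(x)\in X_d$ is the corresponding cube, and $\mathrm{supp}(x)_*(0,\ldots,0)$ denotes the vertex $|\mathrm{supp}(x)_*|(0,\ldots,0)\in|X|$. $\vec\square[n]$ is the $n$-fold product of $\vec\square[1]$ in streams; the stream realization is the coend $\vec{|X|}=\int^{[1]^n}X_n\cdot\vec\square[n]$ in streams, with underlying space $|X|$. $[0,1]$ carries the CW structure with vertices $0,1$. *)

theory Defs
  imports "HOL-Analysis.Analysis"
begin

text \<open>Points of the standard n-cube I^n are represented as functions nat to real
  that vanish outside the first n coordinates; topology = subspace of the product topology.\<close>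

definition cube :: "nat \<Rightarrow> (nat \<Rightarrow> real) set" where
  "cube n = {t. (\<forall>i<n. 0 \<le> t i \<and> t i \<le> 1) \<and> (\<forall>i\<ge>n. t i = 0)}"

definition ocube :: "nat \<Rightarrow> (nat \<Rightarrow> real) set" where
  "ocube n = {t. (\<forall>i<n. 0 < t i \<and> t i < 1) \<and> (\<forall>i\<ge>n. t i = 0)}"

definition coface :: "nat \<Rightarrow> bool \<Rightarrow> (nat \<Rightarrow> real) \<Rightarrow> (nat \<Rightarrow> real)" where
  "coface i e t = (\<lambda>k. if k < i then t k else if k = i then (if e then 1 else 0) else t (k - 1))"

text \<open>A precubical set is given by its sets of n-cubes X n and face maps
  d n i e : X n -> X (n-1) (i < n), i.e. the action of the coface morphisms of the
  cube category, subject to the precubical identities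
  d_i^e d_j^e' = d_(j-1)^e' d_i^e for i < j.\<close>

definition precubical :: "(nat \<Rightarrow> 'a set) \<Rightarrow> (nat \<Rightarrow> nat \<Rightarrow> bool \<Rightarrow> 'a \<Rightarrow> 'a) \<Rightarrow> bool" where
  "precubical X d \<longleftrightarrow>
     (\<forall>n i e x. x \<in> X (Suc n) \<and> i \<le> n \<longrightarrow> d (Suc n) i e x \<in> X n) \<and>
     (\<forall>n i j e e' x. x \<in> X (Suc (Suc n)) \<and> i < j \<and> j \<le> Suc n \<longrightarrow>
        d (Suc n) i e (d (Suc (Suc n)) j e' x) = d (Suc n) (j - 1) e' (d (Suc (Suc n)) i e x))"

type_synonym 'a rpoint = "(nat \<times> 'a \<times> (nat \<Rightarrow> real)) set"

definition rgen :: "(nat \<Rightarrow> 'a set) \<Rightarrow> (nat \<Rightarrow> nat \<Rightarrow> bool \<Rightarrow> 'a \<Rightarrow> 'a)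
    \<Rightarrow> ((nat \<times> 'a \<times> (nat \<Rightarrow> real)) \<times> (nat \<times> 'a \<times> (nat \<Rightarrow> real))) set" where
  "rgen X d = {((n, d (Suc n) i e x, t), (Suc n, x, coface i e t)) | n i e x t.
                 x \<in> X (Suc n) \<and> i \<le> n \<and> t \<in> cube n}"

text \<open>the equivalence relation of the coend\<close>
definition rrel where
  "rrel X d = (rgen X d \<union> (rgen X d)\<inverse>)\<^sup>*"

text \<open>characteristic map |sigma_*| : I^n -> |X| of the cell sigma in X n\<close>
definition chr :: "(nat \<Rightarrow> 'a set) \<Rightarrow> (nat \<Rightarrow> nat \<Rightarrow> bool \<Rightarrow> 'a \<Rightarrow> 'a)
    \<Rightarrow> nat \<Rightarrow> 'a \<Rightarrow> (nat \<Rightarrow> real) \<Rightarrow> 'a rpoint" where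
  "chr X d n x t = rrel X d `` {(n, x, t)}"

definition realization :: "(nat \<Rightarrow> 'a set) \<Rightarrow> (nat \<Rightarrow> nat \<Rightarrow> bool \<Rightarrow> 'a \<Rightarrow> 'a) \<Rightarrow> 'a rpoint set" where
  "realization X d = {chr X d n x t | n x t. x \<in> X n \<and> t \<in> cube n}"

definition realization_top :: "(nat \<Rightarrow> 'a set) \<Rightarrow> (nat \<Rightarrow> nat \<Rightarrow> bool \<Rightarrow> 'a \<Rightarrow> 'a) \<Rightarrow> 'a rpoint topology" where
  "realization_top X d = topology (\<lambda>U. U \<subseteq> realization X d \<and>
      (\<forall>n x. x \<in> X n \<longrightarrow> openin (top_of_set (cube n)) {t \<in> cube n. chr X d n x t \<in> U}))"

definition supp :: "(nat \<Rightarrow> 'a set) \<Rightarrow> (nat \<Rightarrow> nat \<Rightarrow> bool \<Rightarrow> 'a \<Rightarrow> 'a) \<Rightarrow> 'a rpoint \<Rightarrow> nat \<times> 'a" where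
  "supp X d p = (THE (n, x). x \<in> X n \<and> (\<exists>t\<in>ocube n. chr X d n x t = p))"

definition supp_vertex :: "(nat \<Rightarrow> 'a set) \<Rightarrow> (nat \<Rightarrow> nat \<Rightarrow> bool \<Rightarrow> 'a \<Rightarrow> 'a) \<Rightarrow> 'a rpoint \<Rightarrow> 'a rpoint" where
  "supp_vertex X d p = (case supp X d p of (n, x) \<Rightarrow> chr X d n x (\<lambda>_. 0))"

definition skeleton :: "(nat \<Rightarrow> 'a set) \<Rightarrow> (nat \<Rightarrow> nat \<Rightarrow> bool \<Rightarrow> 'a \<Rightarrow> 'a) \<Rightarrow> nat \<Rightarrow> 'a rpoint set" where
  "skeleton X d k = {chr X d n x t | n x t. n \<le> k \<and> x \<in> X n \<and> t \<in> cube n}"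

text \<open>cellular map [0,1] -> |X|, [0,1] with vertices 0, 1 and one 1-cell\<close>
definition cellular_path :: "(nat \<Rightarrow> 'a set) \<Rightarrow> (nat \<Rightarrow> nat \<Rightarrow> bool \<Rightarrow> 'a \<Rightarrow> 'a) \<Rightarrow> (real \<Rightarrow> 'a rpoint) \<Rightarrow> bool" where
  "cellular_path X d f \<longleftrightarrow> f ` {0, 1} \<subseteq> skeleton X d 0 \<and> f ` {0..1} \<subseteq> skeleton X d 1"

text \<open>A circulation is represented as c V x y, meaning x \<le>_V y.\<close>

definition stream_map :: "'a topology \<Rightarrow> ('a set \<Rightarrow> 'a \<Rightarrow> 'a \<Rightarrow> bool)
    \<Rightarrow> 'b topology \<Rightarrow> ('b set \<Rightarrow> 'b \<Rightarrow> 'b \<Rightarrow> bool) \<Rightarrow> ('a \<Rightarrow> 'b) \<Rightarrow> bool" where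
  "stream_map T1 c1 T2 c2 f \<longleftrightarrow> continuous_map T1 T2 f \<and>
     (\<forall>V x y. openin T2 V \<longrightarrow> c1 (f -` V \<inter> topspace T1) x y \<longrightarrow> c2 V (f x) (f y))"

definition circ1 :: "real set \<Rightarrow> real \<Rightarrow> real \<Rightarrow> bool" where
  "circ1 V x y \<longleftrightarrow> x \<le> y \<and> {x..y} \<subseteq> V"

text \<open>circulation of the directed n-cube (product stream of n copies of the directed interval):
  the circulation of the compact pospace I^n with the product order, i.e. x \<le>_V y iff there is a
  chain x = x0 \<le> ... \<le> xk = y whose consecutive order intervals lie in V\<close>
definition cubecirc :: "nat \<Rightarrow> (nat \<Rightarrow> real) set \<Rightarrow> (nat \<Rightarrow> real) \<Rightarrow> (nat \<Rightarrow> real) \<Rightarrow> bool" where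
  "cubecirc n V = tranclp (\<lambda>a b. a \<in> cube n \<and> b \<in> cube n \<and> a \<le> b \<and>
                                 {c \<in> cube n. a \<le> c \<and> c \<le> b} \<subseteq> V)"

text \<open>circulation of the stream realization: the colimit (final) circulation, i.e. the
  smallest circulation making all characteristic maps stream maps\<close>
definition rcirc :: "(nat \<Rightarrow> 'a set) \<Rightarrow> (nat \<Rightarrow> nat \<Rightarrow> bool \<Rightarrow> 'a \<Rightarrow> 'a)
    \<Rightarrow> 'a rpoint set \<Rightarrow> 'a rpoint \<Rightarrow> 'a rpoint \<Rightarrow> bool" where
  "rcirc X d V p q \<longleftrightarrow> (p = q \<and> p \<in> V) \<or>
     tranclp (\<lambda>p q. \<exists>n x s t. x \<in> X n \<and>
                 cubecirc n {u \<in> cube n. chr X d n x u \<in> V} s t \<and>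
                 p = chr X d n x s \<and> q = chr X d n x t) p q"

definition dipath :: "(nat \<Rightarrow> 'a set) \<Rightarrow> (nat \<Rightarrow> nat \<Rightarrow> bool \<Rightarrow> 'a \<Rightarrow> 'a) \<Rightarrow> (real \<Rightarrow> 'a rpoint) \<Rightarrow> bool" where
  "dipath X d f \<longleftrightarrow> stream_map (top_of_set {0..1}) circ1 (realization_top X d) (rcirc X d) f"

end

theory Submission
  imports Defs
begin

text \<open>A point \<open>p\<close> of \<open>|X|\<close> is \<open>chr x t\<close> for a cell \<open>x\<close> and a point \<open>t\<close> of its cube.
  Pushing \<open>t\<close> through the faces given by its coordinates equal to \<open>0\<close> or \<open>1\<close> reaches the
  carrier \<open>supp p\<close>, and \<open>supp_vertex p = chr x (cube_floor t)\<close>, where \<open>cube_floor\<close> rounds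
  every coordinate below \<open>1\<close> down to \<open>0\<close>.

  The circulation of the stream realization is generated by order intervals \<open>s \<le> t\<close> in single
  cubes, so a dipath \<open>\<alpha>\<close> yields a chain of such steps from \<open>\<alpha> 0\<close> to \<open>\<alpha> 1\<close>. For each step
  the vertices \<open>cube_floor s \<le> cube_floor t\<close> of the same cube are joined by a monotone edge path,
  a cellular dipath; concatenating these gives \<open>\<beta>\<close>. As \<open>[0,1]\<close> is contractible and \<open>\<alpha> 0\<close> is
  joined to \<open>supp_vertex (\<alpha> 0)\<close> inside its cell, \<open>\<alpha>\<close> and \<open>\<beta>\<close> are homotopic.

  An edge path is constant only if \<open>cube_floor s = cube_floor t\<close>, and then the potential
  (number of interior coordinates, their sum), ordered lexicographically, strictly increases
  unless \<open>s = t\<close>. For a non-constant loop \<open>\<alpha>\<close>, approximate the two halves at a point \<open>s\<close>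
  with \<open>\<alpha> s \<noteq> \<alpha> 0\<close> separately; if both approximations were constant, the potential would
  give \<open>\<alpha> 0 \<sqsubseteq> \<alpha> s \<sqsubseteq> \<alpha> 1 = \<alpha> 0\<close>.\<close>

section \<open>The topology of the realization\<close>

lemma openin_realization_top:
  "openin (realization_top X d) U \<longleftrightarrow> U \<subseteq> realization X d \<and>
     (\<forall>n x. x \<in> X n \<longrightarrow> openin (top_of_set (cube n)) {t \<in> cube n. chr X d n x t \<in> U})"
proof -
  have preim_Int: "{t \<in> cube n. chr X d n x t \<in> S \<inter> T} =
      {t \<in> cube n. chr X d n x t \<in> S} \<inter> {t \<in> cube n. chr X d n x t \<in> T}" for n x S T
    by blast
  have preim_Union: "{t \<in> cube n. chr X d n x t \<in> \<Union>K} = (\<Union>S\<in>K. {t \<in> cube n. chr X d n x t \<in> S})" for n x K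
    by blast
  have "istopology (\<lambda>U. U \<subseteq> realization X d \<and>
     (\<forall>n x. x \<in> X n \<longrightarrow> openin (top_of_set (cube n)) {t \<in> cube n. chr X d n x t \<in> U}))"
    unfolding istopology_def preim_Int preim_Union
    by (blast intro: openin_Int openin_Union)
  then show ?thesis
    unfolding realization_top_def by (simp add: topology_inverse')
qed

lemma chr_in_realization: "x \<in> X n \<Longrightarrow> t \<in> cube n \<Longrightarrow> chr X d n x t \<in> realization X d"
  unfolding realization_def by blast

lemma realizationE:
  assumes "p \<in> realization X d"
  obtains n x t where "x \<in> X n" "t \<in> cube n" "p = chr X d n x t"
  using assms unfolding realization_def by blast

lemma topspace_realization_top: "topspace (realization_top X d) = realization X d"
proof (rule subset_antisym)
  show "topspace (realization_top X d) \<subseteq> realization X d"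
    using openin_topspace[of "realization_top X d"] unfolding openin_realization_top by (rule conjunct1)
  have "openin (realization_top X d) (realization X d)"
    unfolding openin_realization_top
  proof (intro conjI allI impI)
    fix n x assume "x \<in> X n"
    then have "{t \<in> cube n. chr X d n x t \<in> realization X d} = cube n"
      by (auto intro: chr_in_realization)
    then show "openin (top_of_set (cube n)) {t \<in> cube n. chr X d n x t \<in> realization X d}"
      by (simp add: openin_subtopology_self)
  qed simp
  then show "realization X d \<subseteq> topspace (realization_top X d)"
    by (rule openin_subset)
qed

lemma continuous_map_chr:
  "x \<in> X n \<Longrightarrow> continuous_map (top_of_set (cube n)) (realization_top X d) (chr X d n x)"
  unfolding continuous_map_def topspace_realization_top
  by (auto simp: chr_in_realization openin_realization_top)

section \<open>Carriers of points of the realization\<close>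

definition endpoint :: "real \<Rightarrow> bool" where
  "endpoint r \<longleftrightarrow> r = 0 \<or> r = 1"

definition drop_coord :: "nat \<Rightarrow> (nat \<Rightarrow> real) \<Rightarrow> nat \<Rightarrow> real" where
  "drop_coord i t = (\<lambda>k. if k < i then t k else t (Suc k))"

definition skip_index :: "nat \<Rightarrow> nat \<Rightarrow> nat" where
  "skip_index i k = (if k < i then k else Suc k)"

definition cube_floor :: "(nat \<Rightarrow> real) \<Rightarrow> nat \<Rightarrow> real" where
  "cube_floor t = (\<lambda>k. if t k = 1 then 1 else 0)"

definition interior_coords :: "nat \<Rightarrow> (nat \<Rightarrow> real) \<Rightarrow> nat set" where
  "interior_coords n t = {k. k < n \<and> \<not> endpoint (t k)}"

text \<open>Stripping the boundary coordinates one at a time computes the carrier of \<open>chr x t\<close>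
  (\<open>supp_chr\<close>); the precubical identities make the result independent of the representative
  (\<open>face_nf_coface\<close>).\<close>

primrec face_nf :: "(nat \<Rightarrow> nat \<Rightarrow> bool \<Rightarrow> 'a \<Rightarrow> 'a) \<Rightarrow> nat \<Rightarrow> 'a \<Rightarrow> (nat \<Rightarrow> real)
    \<Rightarrow> nat \<times> 'a \<times> (nat \<Rightarrow> real)" where
  "face_nf d 0 x t = (0, x, t)"
| "face_nf d (Suc n) x t = (if \<exists>i\<le>n. endpoint (t i)
      then (let i = Max {i. i \<le> n \<and> endpoint (t i)}
            in face_nf d n (d (Suc n) i (t i = 1) x) (drop_coord i t))
      else (Suc n, x, t))"

lemma coface_at [simp]: "coface i e t i = (if e then 1 else 0)"
  by (simp add: coface_def)

lemma drop_coord_coface [simp]: "drop_coord i (coface i e t) = t"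
  by (auto simp: drop_coord_def coface_def)

lemma coface_drop_coord: "endpoint (t i) \<Longrightarrow> coface i (t i = 1) (drop_coord i t) = t"
  by (auto simp: drop_coord_def coface_def endpoint_def fun_eq_iff)

lemma drop_coord_in_cube: "t \<in> cube (Suc n) \<Longrightarrow> i \<le> n \<Longrightarrow> drop_coord i t \<in> cube n"
  by (auto simp: cube_def drop_coord_def)

lemma drop_coord_coface_commute: "i \<le> j \<Longrightarrow> drop_coord (Suc j) (coface i e t) = coface i e (drop_coord j t)"
  by (auto simp: drop_coord_def coface_def fun_eq_iff)

lemma coface_above: "i < k \<Longrightarrow> coface i e t k = t (k - 1)"
  by (simp add: coface_def)

lemma face_nf_coface:
  assumes pc: "precubical X d"
  shows "x \<in> X (Suc n) \<Longrightarrow> i \<le> n \<Longrightarrow> t \<in> cube n \<Longrightarrow>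
     face_nf d (Suc n) x (coface i e t) = face_nf d n (d (Suc n) i e x) t"
proof (induction n arbitrary: x i e t)
  case 0
  then have i0: "i = 0" by simp
  then have "{k. k \<le> 0 \<and> endpoint (coface i e t k)} = {0}"
    by (auto simp: endpoint_def)
  then show ?case using i0 by (simp add: endpoint_def)
next
  case (Suc n)
  let ?t' = "coface i e t"
  let ?B = "{k. k \<le> Suc n \<and> endpoint (?t' k)}"
  define M where "M = Max ?B"
  have iB: "i \<in> ?B" using Suc.prems by (simp add: endpoint_def)
  have MB: "M \<in> ?B"
    unfolding M_def using Max_in[of ?B] iB by fastforce
  have iM: "i \<le> M"
    unfolding M_def using Max_ge[of ?B] iB by simp
  have unfold: "face_nf d (Suc (Suc n)) x ?t' =
      face_nf d (Suc n) (d (Suc (Suc n)) M (?t' M = 1) x) (drop_coord M ?t')"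
    using iB by (auto simp: M_def Let_def)
  show ?case
  proof (cases "M = i")
    case True
    then show ?thesis using unfold by (simp del: face_nf.simps)
  next
    case False
    then obtain j where Mj: "M = Suc j" and ij: "i \<le> j"
      using iM by (cases M) auto
    have jn: "j \<le> n" using MB Mj by simp
    have tj: "?t' M = t j" using Mj ij by (simp add: coface_above)
    have bj: "endpoint (t j)" using MB tj by simp
    have "Max {k. k \<le> n \<and> endpoint (t k)} = j"
    proof (rule Max_eqI)
      fix k assume k: "k \<in> {k. k \<le> n \<and> endpoint (t k)}"
      then have "Suc k \<in> ?B \<or> k < i"
        by (cases "i \<le> k") (auto simp: coface_above)
      then show "k \<le> j" using Mj ij Max_ge[of ?B] unfolding M_def by fastforce
    qed (use bj jn in auto)
    then have fold: "face_nf d (Suc n) (d (Suc (Suc n)) i e x) t =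
        face_nf d n (d (Suc n) j (t j = 1) (d (Suc (Suc n)) i e x)) (drop_coord j t)"
      using bj jn by (auto simp: Let_def)
    have x': "d (Suc (Suc n)) (Suc j) (t j = 1) x \<in> X (Suc n)"
      using pc Suc.prems(1) jn unfolding precubical_def by auto
    have "face_nf d (Suc (Suc n)) x ?t' =
        face_nf d (Suc n) (d (Suc (Suc n)) (Suc j) (t j = 1) x) (coface i e (drop_coord j t))"
      using unfold Mj tj ij by (simp add: drop_coord_coface_commute del: face_nf.simps)
    also have "\<dots> = face_nf d n (d (Suc n) i e (d (Suc (Suc n)) (Suc j) (t j = 1) x)) (drop_coord j t)"
      using Suc.IH[OF x'] Suc.prems(3) drop_coord_in_cube ij jn by simp
    also have "d (Suc n) i e (d (Suc (Suc n)) (Suc j) (t j = 1) x) =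
        d (Suc n) j (t j = 1) (d (Suc (Suc n)) i e x)"
      using pc Suc.prems(1) ij jn unfolding precubical_def by (metis diff_Suc_1 le_imp_less_Suc Suc_le_mono)
    finally show ?thesis using fold by simp
  qed
qed

lemma face_nf_rrel:
  assumes pc: "precubical X d" and "(a, b) \<in> rrel X d"
  shows "(\<lambda>(n, x, t). face_nf d n x t) a = (\<lambda>(n, x, t). face_nf d n x t) b"
proof -
  have gen: "(\<lambda>(n, x, t). face_nf d n x t) a = (\<lambda>(n, x, t). face_nf d n x t) b"
    if "(a, b) \<in> rgen X d" for a b
    using that face_nf_coface[OF pc] unfolding rgen_def by auto
  from assms(2) show ?thesis
    unfolding rrel_def by (induction rule: rtrancl_induct) (auto dest: gen)
qed

lemma chr_eq_iff: "chr X d n x t = chr X d m y u \<longleftrightarrow> ((n, x, t), (m, y, u)) \<in> rrel X d"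
proof -
  have "equiv UNIV (rrel X d)"
    unfolding rrel_def by (intro equivI refl_rtrancl sym_rtrancl trans_rtrancl) (auto simp: sym_Un_converse)
  then show ?thesis
    unfolding chr_def by (auto dest: equiv_class_eq_iff)
qed

lemma chr_face: "x \<in> X (Suc n) \<Longrightarrow> i \<le> n \<Longrightarrow> s \<in> cube n \<Longrightarrow>
   chr X d n (d (Suc n) i e x) s = chr X d (Suc n) x (coface i e s)"
  unfolding chr_eq_iff rrel_def rgen_def by blast

lemma face_nf_chr_eq:
  "precubical X d \<Longrightarrow> chr X d n x t = chr X d m y u \<Longrightarrow> face_nf d n x t = face_nf d m y u"
  using face_nf_rrel unfolding chr_eq_iff by fastforce

lemma ocube_subset_cube: "ocube m \<subseteq> cube m"
  by (auto simp: ocube_def cube_def less_imp_le)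

lemma face_nf_ocube: assumes "u \<in> ocube m" shows "face_nf d m y u = (m, y, u)"
proof (cases m)
  case (Suc k)
  have "0 < u i \<and> u i < 1" if "i \<le> k" for i
    using assms Suc that unfolding ocube_def by auto
  then have no_endpoint: "\<not> (\<exists>i\<le>k. endpoint (u i))"
    unfolding endpoint_def by fastforce
  show ?thesis unfolding Suc face_nf.simps if_not_P[OF no_endpoint] by (rule refl)
qed simp

lemma drop_coord_skip_index: "drop_coord i t k = t (skip_index i k)"
  by (simp add: drop_coord_def skip_index_def)

lemma inj_skip_index: "inj (skip_index i)"
  by (auto simp: inj_def skip_index_def split: if_splits)

lemma interior_coords_drop_coord:
  assumes "endpoint (t i)" "i \<le> n"
  shows "interior_coords (Suc n) t = skip_index i ` interior_coords n (drop_coord i t)"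
proof
  show "interior_coords (Suc n) t \<subseteq> skip_index i ` interior_coords n (drop_coord i t)"
  proof
    fix k assume k: "k \<in> interior_coords (Suc n) t"
    then have "k \<noteq> i" using assms by (auto simp: interior_coords_def)
    then show "k \<in> skip_index i ` interior_coords n (drop_coord i t)"
      using k assms
      by (cases "k < i"; intro image_eqI[of _ _ "if k < i then k else k - 1"])
        (auto simp: interior_coords_def skip_index_def drop_coord_def)
  qed
qed (auto simp: interior_coords_def skip_index_def drop_coord_def)

lemma card_interior_coords_drop_coord:
  "endpoint (t i) \<Longrightarrow> i \<le> n \<Longrightarrow>
     card (interior_coords (Suc n) t) = card (interior_coords n (drop_coord i t))"
  by (simp add: interior_coords_drop_coord card_image inj_on_subset[OF inj_skip_index])

lemma sum_interior_coords_drop_coord: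
  "endpoint (t i) \<Longrightarrow> i \<le> n \<Longrightarrow>
     sum t (interior_coords (Suc n) t) = sum (drop_coord i t) (interior_coords n (drop_coord i t))"
  by (simp add: interior_coords_drop_coord sum.reindex inj_on_subset[OF inj_skip_index] comp_def
      drop_coord_skip_index)

lemma interior_coords_ocube: "u \<in> ocube m \<Longrightarrow> interior_coords m u = {..<m}"
  by (auto simp: interior_coords_def ocube_def endpoint_def)

lemma drop_coord_cube_floor: "drop_coord i (cube_floor t) = cube_floor (drop_coord i t)"
  by (simp add: drop_coord_def cube_floor_def fun_eq_iff)

lemma cube_floor_eq_1: "cube_floor t i = 1 \<longleftrightarrow> t i = 1"
  by (simp add: cube_floor_def)

lemma cube_floor_in_cube: "t \<in> cube n \<Longrightarrow> cube_floor t \<in> cube n"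
  by (auto simp: cube_def cube_floor_def)

lemma face_nf_correct:
  assumes pc: "precubical X d"
  shows "x \<in> X n \<Longrightarrow> t \<in> cube n \<Longrightarrow> face_nf d n x t = (m, y, u) \<Longrightarrow>
    y \<in> X m \<and> u \<in> ocube m \<and> chr X d n x t = chr X d m y u \<and>
    chr X d n x (cube_floor t) = chr X d m y (\<lambda>_. 0) \<and>
    card (interior_coords n t) = card (interior_coords m u) \<and>
    sum t (interior_coords n t) = sum u (interior_coords m u)"
proof (induction n arbitrary: x t)
  case 0
  then have "t = (\<lambda>_. 0)" by (auto simp: cube_def)
  moreover have "cube_floor (\<lambda>_. 0) = (\<lambda>_. 0)" by (simp add: cube_floor_def)
  ultimately show ?case using 0 by (auto simp: ocube_def)
next
  case (Suc n)
  show ?case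
  proof (cases "\<exists>i\<le>n. endpoint (t i)")
    case True
    define i where "i = Max {i. i \<le> n \<and> endpoint (t i)}"
    have i: "i \<le> n" "endpoint (t i)"
      unfolding i_def using Max_in[of "{i. i \<le> n \<and> endpoint (t i)}"] True by auto
    define e where "e = (t i = 1)"
    have x': "d (Suc n) i e x \<in> X n" using pc Suc.prems i unfolding precubical_def by blast
    have t': "drop_coord i t \<in> cube n" using drop_coord_in_cube Suc.prems i by blast
    have "face_nf d n (d (Suc n) i e x) (drop_coord i t) = (m, y, u)"
      using Suc.prems True by (simp add: i_def e_def Let_def)
    note IH = Suc.IH[OF x' t' this]
    have "chr X d (Suc n) x t = chr X d n (d (Suc n) i e x) (drop_coord i t)"
      using chr_face[where X=X and n=n and d=d and e=e, OF Suc.prems(1) i(1) t'] coface_drop_coord[of t i, OF i(2)] by (simp add: e_def)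
    moreover have "chr X d (Suc n) x (cube_floor t) = chr X d n (d (Suc n) i e x) (cube_floor (drop_coord i t))"
    proof -
      have "endpoint (cube_floor t i)" by (simp add: cube_floor_def endpoint_def)
      then have "coface i e (drop_coord i (cube_floor t)) = cube_floor t"
        using coface_drop_coord[of "cube_floor t" i] by (simp add: e_def cube_floor_eq_1)
      then show ?thesis
        using chr_face[where X=X and n=n and d=d and e=e, OF Suc.prems(1) i(1) cube_floor_in_cube[OF t']]
        by (simp add: drop_coord_cube_floor)
    qed
    ultimately show ?thesis
      using IH card_interior_coords_drop_coord[of t i, OF i(2,1)] sum_interior_coords_drop_coord[of t i, OF i(2,1)]
      by simp
  next
    case False
    then have "face_nf d (Suc n) x t = (Suc n, x, t)"
      by (simp only: face_nf.simps if_False)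
    then have mu: "(m, y, u) = (Suc n, x, t)" using Suc.prems by simp
    have oc: "t \<in> ocube (Suc n)" using Suc.prems(2) False
      by (auto simp: cube_def ocube_def endpoint_def less_Suc_eq_le order_less_le)
    then have "t k \<noteq> 1" for k by (cases "k < Suc n") (auto simp: ocube_def)
    then have "cube_floor t = (\<lambda>_. 0)" by (simp add: cube_floor_def)
    then show ?thesis using mu oc Suc.prems by auto
  qed
qed

lemma supp_chr:
  assumes pc: "precubical X d" and x: "x \<in> X n" and t: "t \<in> cube n"
    and nf: "face_nf d n x t = (m, y, u)"
  shows "supp X d (chr X d n x t) = (m, y)"
  unfolding supp_def
proof (rule the_equality)
  note nf_props = face_nf_correct[OF pc x t nf]
  show "case (m, y) of (m', y') \<Rightarrow> y' \<in> X m' \<and> (\<exists>u'\<in>ocube m'. chr X d m' y' u' = chr X d n x t)"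
    using nf_props by auto
  fix c assume "case c of (m', y') \<Rightarrow> y' \<in> X m' \<and> (\<exists>u'\<in>ocube m'. chr X d m' y' u' = chr X d n x t)"
  then obtain m' y' u' where "c = (m', y')" "u' \<in> ocube m'" "chr X d m' y' u' = chr X d m y u"
    using nf_props by auto
  then show "c = (m, y)"
    using face_nf_chr_eq[OF pc] face_nf_ocube nf_props by (metis prod.inject)
qed

lemma supp_vertex_chr:
  assumes pc: "precubical X d" and x: "x \<in> X n" and t: "t \<in> cube n"
  shows "supp_vertex X d (chr X d n x t) = chr X d n x (cube_floor t)"
proof -
  obtain m y u where nf: "face_nf d n x t = (m, y, u)" by (metis prod_cases3)
  show ?thesis
    using supp_chr[OF pc x t nf] face_nf_correct[OF pc x t nf] by (simp add: supp_vertex_def)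
qed

lemma interior_coords_chr_invariant:
  assumes pc: "precubical X d" and x: "x \<in> X n" and t: "t \<in> cube n"
    and x': "x' \<in> X n'" and t': "t' \<in> cube n'" and eq: "chr X d n x t = chr X d n' x' t'"
  shows "card (interior_coords n t) = card (interior_coords n' t') \<and>
    sum t (interior_coords n t) = sum t' (interior_coords n' t')"
proof -
  obtain m y u where nf: "face_nf d n x t = (m, y, u)" by (metis prod_cases3)
  moreover from this have "face_nf d n' x' t' = (m, y, u)" using face_nf_chr_eq[OF pc eq] by simp
  ultimately show ?thesis using face_nf_correct[OF pc x t] face_nf_correct[OF pc x' t'] by simp
qed

lemma chr_in_skeleton:
  assumes pc: "precubical X d" and x: "x \<in> X n" and t: "t \<in> cube n"
    and "card (interior_coords n t) \<le> k"
  shows "chr X d n x t \<in> skeleton X d k"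
proof -
  obtain m y u where nf: "face_nf d n x t = (m, y, u)" by (metis prod_cases3)
  note nf_props = face_nf_correct[OF pc x t nf]
  then have "m \<le> k" using assms(4) interior_coords_ocube[of u m] by simp
  then show ?thesis using nf_props ocube_subset_cube unfolding skeleton_def by blast
qed

section \<open>Dipaths\<close>

lemma dipath_continuous_map: "dipath X d f \<Longrightarrow> continuous_map (top_of_set {0..1}) (realization_top X d) f"
  by (simp add: dipath_def stream_map_def)

lemma dipath_rcirc:
  assumes "dipath X d f" "openin (realization_top X d) V" "0 \<le> a" "a \<le> b" "b \<le> 1"
    and "\<And>r. a \<le> r \<Longrightarrow> r \<le> b \<Longrightarrow> f r \<in> V"
  shows "rcirc X d V (f a) (f b)"
proof -
  have "circ1 (f -` V \<inter> topspace (top_of_set {0..1})) a b"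
    using assms by (auto simp: circ1_def)
  then show ?thesis using assms(1,2) unfolding dipath_def stream_map_def by blast
qed

lemma dipathI:
  assumes "continuous_map (top_of_set {0..1}) (realization_top X d) f"
    and "\<And>V a b. openin (realization_top X d) V \<Longrightarrow> 0 \<le> a \<Longrightarrow> a \<le> b \<Longrightarrow> b \<le> 1 \<Longrightarrow>
          (\<And>r. a \<le> r \<Longrightarrow> r \<le> b \<Longrightarrow> f r \<in> V) \<Longrightarrow> rcirc X d V (f a) (f b)"
  shows "dipath X d f"
  unfolding dipath_def stream_map_def
proof (intro conjI allI impI assms(1))
  fix V a b
  assume "openin (realization_top X d) V" "circ1 (f -` V \<inter> topspace (top_of_set {0..1})) a b"
  then show "rcirc X d V (f a) (f b)"
    by (intro assms(2)) (auto simp: circ1_def)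
qed

lemma rcirc_trans: "rcirc X d V p q \<Longrightarrow> rcirc X d V q r \<Longrightarrow> rcirc X d V p r"
  unfolding rcirc_def by (auto intro: tranclp_trans)

lemma dipath_const: "p \<in> realization X d \<Longrightarrow> dipath X d (\<lambda>_. p)"
  by (rule dipathI) (auto simp: topspace_realization_top rcirc_def)

lemma continuous_on_fun_upd: "continuous_on S (\<lambda>r::real. v(i := r))"
proof (rule continuous_on_coordinatewise_then_product)
  fix k show "continuous_on S (\<lambda>r. (v(i := r)) k)"
    by (cases "k = i") auto
qed

lemma fun_upd_in_cube: "v \<in> cube n \<Longrightarrow> i < n \<Longrightarrow> r \<in> {0..1} \<Longrightarrow> v(i := r) \<in> cube n"
  by (auto simp: cube_def)

text \<open>Each segment of this path is a single order interval of the cube.\<close>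

lemma dipath_edge:
  assumes x: "x \<in> X n" and v: "v \<in> cube n" and i: "i < n"
  shows "dipath X d (\<lambda>r. chr X d n x (v(i := r)))"
proof (rule dipathI)
  have "continuous_map (top_of_set {0..1}) (top_of_set (cube n)) (\<lambda>r. v(i := r))"
    using fun_upd_in_cube[OF v i] continuous_on_fun_upd by (auto simp: continuous_map_in_subtopology)
  then have "continuous_map (top_of_set {0..1}) (realization_top X d) (chr X d n x \<circ> (\<lambda>r. v(i := r)))"
    by (rule continuous_map_compose[OF _ continuous_map_chr[where X=X and n=n and d=d, OF x]])
  then show "continuous_map (top_of_set {0..1}) (realization_top X d) (\<lambda>r. chr X d n x (v(i := r)))"
    by (simp add: comp_def)
next
  fix V a b assume V: "openin (realization_top X d) V" and ab: "0 \<le> a" "a \<le> b" "b \<le> 1"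
    and inV: "\<And>r. a \<le> r \<Longrightarrow> r \<le> b \<Longrightarrow> chr X d n x (v(i := r)) \<in> V"
  have "{c \<in> cube n. v(i := a) \<le> c \<and> c \<le> v(i := b)} \<subseteq> {u \<in> cube n. chr X d n x u \<in> V}"
  proof clarify
    fix c assume c: "c \<in> cube n" "v(i := a) \<le> c" "c \<le> v(i := b)"
    have "c k = v k" if "k \<noteq> i" for k
      using c(2,3) that by (metis fun_upd_other le_fun_def order_antisym)
    then have "c = v(i := c i)" by auto
    moreover have "a \<le> c i" "c i \<le> b" using c(2,3) by (auto simp: le_fun_def dest: spec[of _ i])
    ultimately show "chr X d n x c \<in> V" using inV by metis
  qed
  moreover have "v(i := a) \<in> cube n" "v(i := b) \<in> cube n" "v(i := a) \<le> v(i := b)"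
    using fun_upd_in_cube[OF v i] ab by (auto simp: le_fun_def)
  ultimately have "cubecirc n {u \<in> cube n. chr X d n x u \<in> V} (v(i := a)) (v(i := b))"
    unfolding cubecirc_def by (intro tranclp.r_into_trancl) blast
  then show "rcirc X d V (chr X d n x (v(i := a))) (chr X d n x (v(i := b)))"
    unfolding rcirc_def using x by (intro disjI2 tranclp.r_into_trancl) blast
qed

definition join_path :: "(real \<Rightarrow> 'b) \<Rightarrow> (real \<Rightarrow> 'b) \<Rightarrow> real \<Rightarrow> 'b" where
  "join_path f g = (\<lambda>r. if r \<le> 1/2 then f (2 * r) else g (2 * r - 1))"

lemma join_path_ends [simp]: "join_path f g 0 = f 0" "join_path f g 1 = g 1"
  by (auto simp: join_path_def)

lemma join_path_first_half: "r \<le> 1/2 \<Longrightarrow> join_path f g r = f (2 * r)"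
  by (simp add: join_path_def)

lemma join_path_second_half:
  assumes "f 1 = g 0" "1/2 \<le> r"
  shows "join_path f g r = g (2 * r - 1)"
proof (cases "r = 1/2")
  case True
  show ?thesis using assms(1) by (simp add: join_path_def True)
qed (use assms(2) in \<open>simp add: join_path_def\<close>)

lemma continuous_map_join_path:
  assumes f: "continuous_map (top_of_set {0..1::real}) Y f"
    and g: "continuous_map (top_of_set {0..1::real}) Y g" and fg: "f 1 = g 0"
  shows "continuous_map (top_of_set {0..1::real}) Y (join_path f g)"
  unfolding join_path_def
proof (intro continuous_map_cases_le continuous_map_compose[where f="\<lambda>t. 2 * t" and g=f, unfolded comp_def]
    continuous_map_compose[where f="\<lambda>t. 2 * t - 1" and g=g, unfolded comp_def], force, force)
  show "continuous_map (subtopology (top_of_set {0..1}) {x \<in> topspace (top_of_set {0..1}). x \<le> 1/2})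
      (top_of_set {0..1::real}) ((*) 2)"
    by (auto simp: continuous_map_in_subtopology continuous_map_from_subtopology)
  have "continuous_map (subtopology (top_of_set {0..1}) {x. 0 \<le> x \<and> x \<le> 1 \<and> 1 \<le> x * 2})
      euclideanreal (\<lambda>t::real. 2 * t - 1)"
    by (intro continuous_intros) (force intro: continuous_map_from_subtopology)
  then show "continuous_map (subtopology (top_of_set {0..1}) {x \<in> topspace (top_of_set {0..1}). 1/2 \<le> x})
      (top_of_set {0..1::real}) (\<lambda>t. 2 * t - 1)"
    by (force simp: continuous_map_in_subtopology)
  show "f (2 * x) = g (2 * x - 1)" if "x \<in> topspace (top_of_set {0..1::real})" "x = 1/2" for x
  proof -
    have "2 * x = 1" "2 * x - 1 = 0" using that by auto
    then show ?thesis using fg by simp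
  qed
qed (auto simp: f g)

lemma dipath_join_path:
  assumes f: "dipath X d f" and g: "dipath X d g" and fg: "f 1 = g 0"
  shows "dipath X d (join_path f g)"
proof (rule dipathI)
  show "continuous_map (top_of_set {0..1}) (realization_top X d) (join_path f g)"
    using f g fg by (simp add: continuous_map_join_path dipath_continuous_map)
next
  fix V a b assume V: "openin (realization_top X d) V" and ab: "0 \<le> a" "a \<le> b" "b \<le> 1"
    and inV: "\<And>r. a \<le> r \<Longrightarrow> r \<le> b \<Longrightarrow> join_path f g r \<in> V"
  have first_half: "rcirc X d V (join_path f g a') (join_path f g b')"
    if "a \<le> a'" "a' \<le> b'" "b' \<le> b" "b' \<le> 1/2" for a' b'
  proof -
    have "rcirc X d V (f (2 * a')) (f (2 * b'))"
    proof (rule dipath_rcirc[OF f V])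
      fix r assume "2 * a' \<le> r" "r \<le> 2 * b'"
      then show "f r \<in> V"
        using inV[of "r / 2"] join_path_first_half[of "r / 2" f g] that by simp
    qed (use that ab in auto)
    then show ?thesis using that by (simp add: join_path_first_half)
  qed
  have second_half: "rcirc X d V (join_path f g a') (join_path f g b')"
    if "a \<le> a'" "a' \<le> b'" "b' \<le> b" "1/2 \<le> a'" for a' b'
  proof -
    have "rcirc X d V (g (2 * a' - 1)) (g (2 * b' - 1))"
    proof (rule dipath_rcirc[OF g V])
      fix r assume "2 * a' - 1 \<le> r" "r \<le> 2 * b' - 1"
      moreover have "2 * ((r + 1) / 2) - 1 = r" by (simp add: field_simps)
      ultimately show "g r \<in> V"
        using inV[of "(r + 1) / 2"] join_path_second_half[of f g "(r + 1) / 2", OF fg] that by simp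
    qed (use that ab in auto)
    then show ?thesis using that by (simp add: join_path_second_half[of f g, OF fg])
  qed
  show "rcirc X d V (join_path f g a) (join_path f g b)"
  proof (cases "b \<le> 1/2 \<or> 1/2 \<le> a")
    case True
    then show ?thesis using first_half second_half ab by auto
  next
    case False
    then show ?thesis using first_half[of a "1/2"] second_half[of "1/2" b] rcirc_trans by force
  qed
qed

section \<open>Cellular dipaths between vertices\<close>

definition nonconstant_path :: "(real \<Rightarrow> 'b) \<Rightarrow> bool" where
  "nonconstant_path f \<longleftrightarrow> (\<exists>s\<in>{0..1}. \<exists>t\<in>{0..1}. f s \<noteq> f t)"

lemma nonconstant_join_path_left:
  assumes "nonconstant_path f"
  shows "nonconstant_path (join_path f g)"
proof -
  obtain s t where st: "s \<in> {0..1}" "t \<in> {0..1}" "f s \<noteq> f t"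
    using assms unfolding nonconstant_path_def by blast
  then show ?thesis
    unfolding nonconstant_path_def using join_path_first_half[of "s / 2" f g] join_path_first_half[of "t / 2" f g]
    by (intro bexI[of _ "s / 2"] bexI[of _ "t / 2"]) auto
qed

lemma nonconstant_join_path_right:
  assumes "nonconstant_path g" "f 1 = g 0"
  shows "nonconstant_path (join_path f g)"
proof -
  obtain s t where st: "s \<in> {0..1}" "t \<in> {0..1}" "g s \<noteq> g t"
    using assms unfolding nonconstant_path_def by blast
  have "join_path f g ((r + 1) / 2) = g r" if "0 \<le> r" for r
    using that join_path_second_half[of f g "(r + 1) / 2", OF assms(2)] by (simp add: field_simps)
  then show ?thesis
    unfolding nonconstant_path_def using st
    by (intro bexI[of _ "(s + 1) / 2"] bexI[of _ "(t + 1) / 2"]) auto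
qed

lemma skeleton_mono: "j \<le> k \<Longrightarrow> skeleton X d j \<subseteq> skeleton X d k"
  by (force simp: skeleton_def)

lemma cellular_path_join_path:
  "cellular_path X d f \<Longrightarrow> cellular_path X d g \<Longrightarrow> cellular_path X d (join_path f g)"
  unfolding cellular_path_def join_path_def by (auto simp: image_subset_iff)

lemma cellular_path_const: "p \<in> skeleton X d 0 \<Longrightarrow> cellular_path X d (\<lambda>_. p)"
  unfolding cellular_path_def using skeleton_mono[of 0 1 X d] by auto

definition cellular_dipath :: "(nat \<Rightarrow> 'a set) \<Rightarrow> (nat \<Rightarrow> nat \<Rightarrow> bool \<Rightarrow> 'a \<Rightarrow> 'a)
    \<Rightarrow> (real \<Rightarrow> 'a rpoint) \<Rightarrow> 'a rpoint \<Rightarrow> 'a rpoint \<Rightarrow> bool" where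
  "cellular_dipath X d \<beta> p q \<longleftrightarrow> dipath X d \<beta> \<and> cellular_path X d \<beta> \<and> \<beta> 0 = p \<and> \<beta> 1 = q"

lemma cellular_dipath_join_path:
  "cellular_dipath X d f p q \<Longrightarrow> cellular_dipath X d g q r \<Longrightarrow> cellular_dipath X d (join_path f g) p r"
  unfolding cellular_dipath_def using dipath_join_path cellular_path_join_path by fastforce

lemma cellular_dipath_const:
  "p \<in> realization X d \<Longrightarrow> p \<in> skeleton X d 0 \<Longrightarrow> cellular_dipath X d (\<lambda>_. p) p p"
  by (simp add: cellular_dipath_def dipath_const cellular_path_const)

definition cube_vertex :: "nat \<Rightarrow> (nat \<Rightarrow> real) \<Rightarrow> bool" where
  "cube_vertex n v \<longleftrightarrow> v \<in> cube n \<and> (\<forall>k. v k = 0 \<or> v k = 1)"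

lemma interior_coords_cube_vertex: "cube_vertex n v \<Longrightarrow> interior_coords n v = {}"
  by (auto simp: cube_vertex_def interior_coords_def endpoint_def)

lemma interior_coords_fun_upd: "cube_vertex n v \<Longrightarrow> interior_coords n (v(i := r)) \<subseteq> {i}"
  by (auto simp: cube_vertex_def interior_coords_def endpoint_def)

lemma cube_vertex_cube_floor: "t \<in> cube n \<Longrightarrow> cube_vertex n (cube_floor t)"
  using cube_floor_in_cube by (auto simp: cube_vertex_def cube_floor_def)

lemma chr_cube_vertex_in_skeleton0:
  "precubical X d \<Longrightarrow> x \<in> X n \<Longrightarrow> cube_vertex n v \<Longrightarrow> chr X d n x v \<in> skeleton X d 0"
  using chr_in_skeleton[of X d x n v 0] interior_coords_cube_vertex[of n v] by (simp add: cube_vertex_def)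

lemma cellular_dipath_edge:
  assumes pc: "precubical X d" and x: "x \<in> X n" and a: "cube_vertex n a" and i: "i < n" "a i = 0"
  shows "cellular_dipath X d (\<lambda>r. chr X d n x (a(i := r))) (chr X d n x a) (chr X d n x (a(i := 1)))
    \<and> nonconstant_path (\<lambda>r. chr X d n x (a(i := r)))"
proof (intro conjI)
  have a_cube: "a \<in> cube n" using a by (simp add: cube_vertex_def)
  have a1: "cube_vertex n (a(i := 1))" using a i by (auto simp: cube_vertex_def cube_def)
  have "chr X d n x (a(i := r)) \<in> skeleton X d 1" if "r \<in> {0..1}" for r
    using chr_in_skeleton[OF pc x fun_upd_in_cube[OF a_cube i(1) that]] card_mono[OF _ interior_coords_fun_upd[OF a]]
    by simp
  then show "cellular_dipath X d (\<lambda>r. chr X d n x (a(i := r))) (chr X d n x a) (chr X d n x (a(i := 1)))"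
    unfolding cellular_dipath_def cellular_path_def
    using dipath_edge[where X=X and n=n and d=d, OF x a_cube i(1)] chr_cube_vertex_in_skeleton0[OF pc x] a a1 i(2)
    by (auto simp: fun_upd_idem)
  have "interior_coords n (a(i := 1/2)) = {i}"
    using i a by (auto simp: interior_coords_def endpoint_def cube_vertex_def)
  then have "card (interior_coords n (a(i := 1/2))) \<noteq> card (interior_coords n (a(i := 0)))"
    using interior_coords_cube_vertex[OF a] i(2) by (simp add: fun_upd_idem)
  then have "chr X d n x (a(i := 1/2)) \<noteq> chr X d n x (a(i := 0))"
    using interior_coords_chr_invariant[OF pc x _ x] fun_upd_in_cube[OF a_cube i(1)] by fastforce
  then show "nonconstant_path (\<lambda>r. chr X d n x (a(i := r)))"
    unfolding nonconstant_path_def by (intro bexI[of _ "1/2"] bexI[of _ 0]) auto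
qed

text \<open>Raising the coordinates in which \<open>a\<close> and \<open>b\<close> differ one at a time gives an edge path.\<close>

lemma cellular_dipath_cube_vertices:
  assumes pc: "precubical X d" and x: "x \<in> X n"
  shows "cube_vertex n a \<Longrightarrow> cube_vertex n b \<Longrightarrow> a \<le> b \<Longrightarrow> card {k. k < n \<and> a k \<noteq> b k} = D \<Longrightarrow>
    \<exists>\<beta>. cellular_dipath X d \<beta> (chr X d n x a) (chr X d n x b) \<and> (a \<noteq> b \<longrightarrow> nonconstant_path \<beta>)"
proof (induction D arbitrary: a)
  case 0
  then have "a = b"
    by (auto simp: cube_vertex_def cube_def fun_eq_iff) (metis not_less)
  moreover have "a \<in> cube n" using 0(1) by (simp add: cube_vertex_def)
  ultimately show ?case
    using cellular_dipath_const chr_in_realization[where X=X and n=n and d=d, OF x] chr_cube_vertex_in_skeleton0[OF pc x 0(1)] by blast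
next
  case (Suc D)
  then obtain i where i: "i < n" "a i \<noteq> b i"
    by (metis (mono_tags, lifting) Collect_empty_eq card.empty nat.distinct(1))
  have ab_i: "a i = 0" "b i = 1" using i Suc.prems(1-3) unfolding cube_vertex_def le_fun_def
    by (metis order_antisym zero_le_one order_refl)+
  define a' where "a' = a(i := 1)"
  have a': "cube_vertex n a'" "a' \<le> b"
    using Suc.prems(1,3) i ab_i by (auto simp: a'_def cube_vertex_def cube_def le_fun_def)
  have "{k. k < n \<and> a k \<noteq> b k} = insert i {k. k < n \<and> a' k \<noteq> b k}"
    "i \<notin> {k. k < n \<and> a' k \<noteq> b k}"
    using i ab_i by (auto simp: a'_def)
  then have "card {k. k < n \<and> a' k \<noteq> b k} = D"
    using Suc.prems(4) by simp
  then obtain \<beta> where "cellular_dipath X d \<beta> (chr X d n x a') (chr X d n x b)"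
    using Suc.IH[OF a'(1) Suc.prems(2) a'(2)] by blast
  then show ?case
    using cellular_dipath_edge[OF pc x Suc.prems(1) i(1) ab_i(1)] cellular_dipath_join_path
      nonconstant_join_path_left unfolding a'_def by blast
qed

section \<open>A potential on the realization\<close>

definition potential :: "(nat \<Rightarrow> 'a set) \<Rightarrow> (nat \<Rightarrow> nat \<Rightarrow> bool \<Rightarrow> 'a \<Rightarrow> 'a) \<Rightarrow> 'a rpoint \<Rightarrow> nat \<times> real" where
  "potential X d p = (SOME c. \<exists>n x t. x \<in> X n \<and> t \<in> cube n \<and> p = chr X d n x t \<and>
      c = (card (interior_coords n t), sum t (interior_coords n t)))"

lemma potential_chr:
  assumes pc: "precubical X d" and x: "x \<in> X n" and t: "t \<in> cube n"
  shows "potential X d (chr X d n x t) = (card (interior_coords n t), sum t (interior_coords n t))"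
proof -
  let ?P = "\<lambda>c. \<exists>n' x' t'. x' \<in> X n' \<and> t' \<in> cube n' \<and> chr X d n x t = chr X d n' x' t' \<and>
      c = (card (interior_coords n' t'), sum t' (interior_coords n' t'))"
  have "?P (card (interior_coords n t), sum t (interior_coords n t))" using x t by blast
  then have "?P (potential X d (chr X d n x t))" unfolding potential_def by (rule someI)
  then show ?thesis using interior_coords_chr_invariant[OF pc x t] by force
qed

definition lex_le :: "nat \<times> real \<Rightarrow> nat \<times> real \<Rightarrow> bool" where
  "lex_le a b \<longleftrightarrow> fst a < fst b \<or> (fst a = fst b \<and> snd a \<le> snd b)"

lemma lex_le_trans: "lex_le a b \<Longrightarrow> lex_le b c \<Longrightarrow> lex_le a c"
  by (auto simp: lex_le_def)

lemma lex_le_antisym: "lex_le a b \<Longrightarrow> lex_le b a \<Longrightarrow> a = b"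
  by (auto simp: lex_le_def prod_eq_iff)

definition potential_le :: "(nat \<Rightarrow> 'a set) \<Rightarrow> (nat \<Rightarrow> nat \<Rightarrow> bool \<Rightarrow> 'a \<Rightarrow> 'a)
    \<Rightarrow> 'a rpoint \<Rightarrow> 'a rpoint \<Rightarrow> bool" where
  "potential_le X d p q \<longleftrightarrow>
     lex_le (potential X d p) (potential X d q) \<and> (potential X d p = potential X d q \<longrightarrow> p = q)"

lemma potential_le_refl: "potential_le X d p p"
  by (simp add: potential_le_def lex_le_def)

lemma potential_le_trans: "potential_le X d p q \<Longrightarrow> potential_le X d q r \<Longrightarrow> potential_le X d p r"
  unfolding potential_le_def by (metis lex_le_antisym lex_le_trans)

lemma potential_le_antisym: "potential_le X d p q \<Longrightarrow> potential_le X d q p \<Longrightarrow> p = q"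
  unfolding potential_le_def by (metis lex_le_antisym)

lemma interior_coords_mono:
  assumes s: "s \<in> cube n" and st: "s \<le> t" and ones: "\<And>k. s k = 1 \<longleftrightarrow> t k = 1"
  shows "interior_coords n s \<subseteq> interior_coords n t"
proof
  fix k assume "k \<in> interior_coords n s"
  then have k: "k < n" "s k \<noteq> 0" "s k \<noteq> 1" by (auto simp: interior_coords_def endpoint_def)
  then have "0 < s k" using s by (auto simp: cube_def order_le_less)
  then have "t k \<noteq> 0" using st le_funD[OF st, of k] by auto
  then show "k \<in> interior_coords n t" using k ones[of k] by (simp add: interior_coords_def endpoint_def)
qed

text \<open>Moving up without changing \<open>cube_floor\<close> can only turn coordinates \<open>0\<close> into interior
  ones and increase interior ones.\<close>

lemma potential_le_chr:
  assumes pc: "precubical X d" and x: "x \<in> X n" and s: "s \<in> cube n" and t: "t \<in> cube n"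
    and st: "s \<le> t" and floor_eq: "cube_floor s = cube_floor t"
  shows "potential_le X d (chr X d n x s) (chr X d n x t)"
proof -
  have ones: "s k = 1 \<longleftrightarrow> t k = 1" for k
    using floor_eq cube_floor_eq_1 by metis
  let ?I = "interior_coords n"
  have sub: "?I s \<subseteq> ?I t" using interior_coords_mono[OF s st ones] .
  have fin: "finite (?I t)" by (simp add: interior_coords_def)
  have same_I: "?I s = ?I t" if "card (?I s) = card (?I t)"
    using that sub fin by (simp add: card_subset_eq)
  have lex: "lex_le (card (?I s), sum s (?I s)) (card (?I t), sum t (?I t))"
  proof (cases "card (?I s) = card (?I t)")
    case True
    then show ?thesis using same_I st by (auto simp: lex_le_def le_fun_def intro: sum_mono)
  next
    case False
    then show ?thesis using card_mono[OF fin sub] by (simp add: lex_le_def)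
  qed
  have "s = t" if eq: "card (?I s) = card (?I t)" "sum s (?I s) = sum t (?I t)"
  proof
    fix k
    show "s k = t k"
    proof (cases "k \<in> ?I t")
      case True
      then show ?thesis using sum_mono_inv[of s "?I t" t k] eq same_I st fin by (simp add: le_fun_def)
    next
      case False
      then show ?thesis
        using same_I[OF eq(1)] ones[of k] s t
        by (cases "k < n") (auto simp: interior_coords_def endpoint_def cube_def)
    qed
  qed
  then show ?thesis
    using lex unfolding potential_le_def potential_chr[OF pc x s] potential_chr[OF pc x t] by auto
qed

lemma cube_floor_mono:
  assumes t: "t \<in> cube n" and st: "s \<le> t"
  shows "cube_floor s \<le> cube_floor t"
proof (rule le_funI)
  fix k
  have "t k \<le> 1" using t by (cases "k < n") (auto simp: cube_def)
  moreover have "s k \<le> t k" using st by (simp add: le_fun_def)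
  ultimately show "cube_floor s k \<le> cube_floor t k" by (simp add: cube_floor_def)
qed

lemma cellular_dipath_cube_step:
  assumes pc: "precubical X d" and x: "x \<in> X n" and s: "s \<in> cube n" and t: "t \<in> cube n" and st: "s \<le> t"
  shows "\<exists>\<beta>. cellular_dipath X d \<beta> (supp_vertex X d (chr X d n x s)) (supp_vertex X d (chr X d n x t)) \<and>
    (nonconstant_path \<beta> \<or> potential_le X d (chr X d n x s) (chr X d n x t))"
proof -
  obtain \<beta> where "cellular_dipath X d \<beta> (chr X d n x (cube_floor s)) (chr X d n x (cube_floor t))"
      "cube_floor s \<noteq> cube_floor t \<longrightarrow> nonconstant_path \<beta>"
    using cellular_dipath_cube_vertices[OF pc x cube_vertex_cube_floor[OF s] cube_vertex_cube_floor[OF t]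
        cube_floor_mono[OF t st] refl] by blast
  then show ?thesis
    using supp_vertex_chr[OF pc x s] supp_vertex_chr[OF pc x t] potential_le_chr[OF pc x s t st] by metis
qed

section \<open>Cellular approximation of dipaths\<close>

lemma cubecirc_imp_le: "cubecirc n W s t \<Longrightarrow> s \<in> cube n \<and> t \<in> cube n \<and> s \<le> t"
  unfolding cubecirc_def by (induction rule: tranclp_induct) (auto intro: order_trans)

lemma cellular_dipath_rcirc_chain:
  assumes pc: "precubical X d"
  shows "(\<lambda>p q. \<exists>n x s t. x \<in> X n \<and> cubecirc n {u \<in> cube n. chr X d n x u \<in> V} s t \<and>
                 p = chr X d n x s \<and> q = chr X d n x t)\<^sup>+\<^sup>+ p q \<Longrightarrow>
    \<exists>\<beta>. cellular_dipath X d \<beta> (supp_vertex X d p) (supp_vertex X d q) \<and>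
      (nonconstant_path \<beta> \<or> potential_le X d p q)"
proof (induction rule: tranclp_induct)
  case (base q)
  then show ?case using cellular_dipath_cube_step[OF pc] cubecirc_imp_le by blast
next
  case (step q r)
  obtain \<beta>1 where \<beta>1: "cellular_dipath X d \<beta>1 (supp_vertex X d p) (supp_vertex X d q)"
      "nonconstant_path \<beta>1 \<or> potential_le X d p q"
    using step.IH by blast
  obtain \<beta>2 where \<beta>2: "cellular_dipath X d \<beta>2 (supp_vertex X d q) (supp_vertex X d r)"
      "nonconstant_path \<beta>2 \<or> potential_le X d q r"
    using step.hyps(2) cellular_dipath_cube_step[OF pc] cubecirc_imp_le by blast
  have "\<beta>1 1 = \<beta>2 0" using \<beta>1 \<beta>2 by (simp add: cellular_dipath_def)
  then show ?case
    using cellular_dipath_join_path[OF \<beta>1(1) \<beta>2(1)] nonconstant_join_path_left nonconstant_join_path_right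
      potential_le_trans \<beta>1(2) \<beta>2(2) by metis
qed

lemma supp_vertex_in_skeleton0:
  assumes pc: "precubical X d" and p: "p \<in> realization X d"
  shows "supp_vertex X d p \<in> realization X d \<inter> skeleton X d 0"
proof -
  obtain n x t where nxt: "x \<in> X n" "t \<in> cube n" "p = chr X d n x t" using p by (rule realizationE)
  then show ?thesis
    using supp_vertex_chr[OF pc nxt(1,2)] chr_cube_vertex_in_skeleton0[OF pc nxt(1)] cube_vertex_cube_floor
      chr_in_realization[where X=X and n=n and d=d, OF nxt(1) cube_floor_in_cube[OF nxt(2)]] by simp
qed

lemma cellular_dipath_rcirc:
  assumes pc: "precubical X d" and p: "p \<in> realization X d" and "rcirc X d V p q"
  shows "\<exists>\<beta>. cellular_dipath X d \<beta> (supp_vertex X d p) (supp_vertex X d q) \<and>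
    (nonconstant_path \<beta> \<or> potential_le X d p q)"
proof (cases "p = q")
  case True
  then show ?thesis
    using cellular_dipath_const supp_vertex_in_skeleton0[OF pc p] potential_le_refl by blast
next
  case False
  then show ?thesis using assms(3) cellular_dipath_rcirc_chain[OF pc] unfolding rcirc_def by blast
qed

lemma dipath_in_realization:
  assumes "dipath X d \<alpha>" "r \<in> {0..1}"
  shows "\<alpha> r \<in> realization X d"
  using continuous_map_image_subset_topspace[OF dipath_continuous_map[OF assms(1)]] assms(2)
  by (auto simp: topspace_realization_top)

lemma cellular_dipath_segment:
  assumes pc: "precubical X d" and \<alpha>: "dipath X d \<alpha>" and ab: "0 \<le> a" "a \<le> b" "b \<le> 1"
  shows "\<exists>\<beta>. cellular_dipath X d \<beta> (supp_vertex X d (\<alpha> a)) (supp_vertex X d (\<alpha> b)) \<and>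
    (nonconstant_path \<beta> \<or> potential_le X d (\<alpha> a) (\<alpha> b))"
proof -
  have "openin (realization_top X d) (realization X d)"
    by (metis openin_topspace topspace_realization_top)
  then have "rcirc X d (realization X d) (\<alpha> a) (\<alpha> b)"
    using dipath_rcirc[OF \<alpha> _ ab] dipath_in_realization[OF \<alpha>] ab by simp
  then show ?thesis
    using cellular_dipath_rcirc[OF pc dipath_in_realization[OF \<alpha>]] ab by simp
qed

lemma cellular_dipath_approximation:
  assumes pc: "precubical X d" and \<alpha>: "dipath X d \<alpha>"
  shows "\<exists>\<beta>. cellular_dipath X d \<beta> (supp_vertex X d (\<alpha> 0)) (supp_vertex X d (\<alpha> 1)) \<and>
    (nonconstant_path \<alpha> \<and> \<alpha> 0 = \<alpha> 1 \<longrightarrow> nonconstant_path \<beta>)"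
proof (cases "nonconstant_path \<alpha> \<and> \<alpha> 0 = \<alpha> 1")
  case False
  then show ?thesis using cellular_dipath_segment[OF pc \<alpha>, of 0 1] by auto
next
  case True
  then obtain s where s: "s \<in> {0..1}" "\<alpha> s \<noteq> \<alpha> 0"
    unfolding nonconstant_path_def by metis
  obtain \<beta>1 where \<beta>1: "cellular_dipath X d \<beta>1 (supp_vertex X d (\<alpha> 0)) (supp_vertex X d (\<alpha> s))"
      "nonconstant_path \<beta>1 \<or> potential_le X d (\<alpha> 0) (\<alpha> s)"
    using cellular_dipath_segment[OF pc \<alpha>, of 0 s] s by auto
  obtain \<beta>2 where \<beta>2: "cellular_dipath X d \<beta>2 (supp_vertex X d (\<alpha> s)) (supp_vertex X d (\<alpha> 1))"
      "nonconstant_path \<beta>2 \<or> potential_le X d (\<alpha> s) (\<alpha> 1)"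
    using cellular_dipath_segment[OF pc \<alpha>, of s 1] s by auto
  have "\<beta>1 1 = \<beta>2 0" using \<beta>1 \<beta>2 by (simp add: cellular_dipath_def)
  then have "nonconstant_path (join_path \<beta>1 \<beta>2)"
    using \<beta>1(2) \<beta>2(2) nonconstant_join_path_left nonconstant_join_path_right potential_le_antisym True s(2)
    by metis
  then show ?thesis using cellular_dipath_join_path[OF \<beta>1(1) \<beta>2(1)] by blast
qed

section \<open>Homotopy\<close>

lemma homotopic_with_path_start:
  assumes f: "continuous_map (top_of_set {0..1::real}) Y f"
  shows "homotopic_with (\<lambda>_. True) (top_of_set {0..1}) Y f (\<lambda>_. f 0)"
proof -
  obtain c where hf: "homotopic_with (\<lambda>_. True) (top_of_set {0..1}) Y f (\<lambda>_. c)"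
    using nullhomotopic_from_contractible_space[OF f] by (auto simp: convex_imp_contractible)
  have "homotopic_with (\<lambda>_. True) (top_of_set {0..1}) Y (f \<circ> (\<lambda>_. 0)) ((\<lambda>_. c) \<circ> (\<lambda>_. 0::real))"
    by (rule homotopic_with_compose_continuous_map_right[OF hf]) auto
  then have "homotopic_with (\<lambda>_. True) (top_of_set {0..1}) Y (\<lambda>_. c) (\<lambda>_. f 0)"
    by (simp add: comp_def homotopic_with_sym)
  then show ?thesis by (rule homotopic_with_trans[OF hf])
qed

lemma homotopic_with_paths_path_component:
  assumes f: "continuous_map (top_of_set {0..1::real}) Y f" and g: "continuous_map (top_of_set {0..1}) Y g"
    and "path_component_of Y (f 0) (g 0)"
  shows "homotopic_with (\<lambda>_. True) (top_of_set {0..1}) Y f g"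
proof -
  have "homotopic_with (\<lambda>_. True) (top_of_set {0..1::real}) Y (\<lambda>_. f 0) (\<lambda>_. g 0)"
    using assms(3) by (simp add: homotopic_constant_maps)
  then show ?thesis
    using homotopic_with_path_start[OF f] homotopic_with_path_start[OF g]
    by (meson homotopic_with_symD homotopic_with_trans)
qed

text \<open>The straight segment from \<open>t\<close> to \<open>cube_floor t\<close> stays in the cube.\<close>

lemma path_component_supp_vertex:
  assumes pc: "precubical X d" and p: "p \<in> realization X d"
  shows "path_component_of (realization_top X d) p (supp_vertex X d p)"
proof -
  obtain n x t where nxt: "x \<in> X n" "t \<in> cube n" "p = chr X d n x t" using p by (rule realizationE)
  define h where "h = (\<lambda>r::real. \<lambda>k. (1 - r) * t k + r * cube_floor t k)"
  have "h r \<in> cube n" if "r \<in> {0..1}" for r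
  proof -
    have "0 \<le> h r k \<and> h r k \<le> 1" if "k < n" for k
    proof -
      have "0 \<le> t k" "t k \<le> 1" "0 \<le> cube_floor t k" "cube_floor t k \<le> 1"
        using nxt(2) \<open>k < n\<close> by (auto simp: cube_def cube_floor_def)
      then show ?thesis
        using convex_bound_le[of "t k" 1 "cube_floor t k" "1 - r" r] \<open>r \<in> {0..1}\<close> by (auto simp: h_def)
    qed
    moreover have "h r k = 0" if "n \<le> k" for k
      using nxt(2) that by (auto simp: cube_def cube_floor_def h_def)
    ultimately show ?thesis by (auto simp: cube_def)
  qed
  moreover have "continuous_on {0..1} h" unfolding h_def by (intro continuous_intros)
  ultimately have "continuous_map (top_of_set {0..1}) (top_of_set (cube n)) h"
    by (auto simp: continuous_map_in_subtopology)
  then have "pathin (realization_top X d) (chr X d n x \<circ> h)"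
    unfolding pathin_def using continuous_map_compose continuous_map_chr[where X=X and n=n and d=d, OF nxt(1)] by blast
  moreover have "h 0 = t" "h 1 = cube_floor t" by (auto simp: h_def)
  ultimately show ?thesis
    unfolding path_component_of_def using supp_vertex_chr[OF pc nxt(1,2)] nxt(3)
    by (intro exI[of _ "chr X d n x \<circ> h"]) auto
qed

theorem mainTheorem6:
  fixes X :: "nat \<Rightarrow> 'a set" and d :: "nat \<Rightarrow> nat \<Rightarrow> bool \<Rightarrow> 'a \<Rightarrow> 'a"
    and \<alpha> :: "real \<Rightarrow> 'a rpoint"
  assumes "precubical X d"
    and "dipath X d \<alpha>"
  shows "\<exists>\<beta>. dipath X d \<beta> \<and>
           \<beta> 0 = supp_vertex X d (\<alpha> 0) \<and> \<beta> 1 = supp_vertex X d (\<alpha> 1) \<and>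
           cellular_path X d \<beta> \<and>
           homotopic_with (\<lambda>_. True) (top_of_set {0..1}) (realization_top X d) \<alpha> \<beta> \<and>
           ((\<exists>s\<in>{0..1}. \<exists>t\<in>{0..1}. \<alpha> s \<noteq> \<alpha> t) \<and> \<alpha> 0 = \<alpha> 1
              \<longrightarrow> (\<exists>s\<in>{0..1}. \<exists>t\<in>{0..1}. \<beta> s \<noteq> \<beta> t))"
proof -
  obtain \<beta> where \<beta>: "cellular_dipath X d \<beta> (supp_vertex X d (\<alpha> 0)) (supp_vertex X d (\<alpha> 1))"
      "nonconstant_path \<alpha> \<and> \<alpha> 0 = \<alpha> 1 \<longrightarrow> nonconstant_path \<beta>"
    using cellular_dipath_approximation[OF assms] by blast
  have "path_component_of (realization_top X d) (\<alpha> 0) (\<beta> 0)"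
    using \<beta>(1) path_component_supp_vertex[OF assms(1) dipath_in_realization[OF assms(2)]]
    by (simp add: cellular_dipath_def)
  then have "homotopic_with (\<lambda>_. True) (top_of_set {0..1}) (realization_top X d) \<alpha> \<beta>"
    using \<beta>(1) homotopic_with_paths_path_component dipath_continuous_map assms(2)
    unfolding cellular_dipath_def by blast
  then show ?thesis
    using \<beta> unfolding cellular_dipath_def nonconstant_path_def by blast
qed

end
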